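(* Let $R$ be a commutative ring with identity and let $A$ be a $2\times 2$ matrix over $R$ whose entries generate the ideal $R$. Then $A$ is equivalent to a diagonal matrix if and only if the submodule of $R^2$ generated by the rows of $A$ contains a unimodular row. Moreover, in this case $A$ is equivalent to a matrix of the form $\begin{pmatrix}1&0\\0&d\end{pmatrix}$ for some $d\in R$.
   Context: Two matrices $A,B\in M_{m,n}(R)$ are equivalent if there exist invertible matrices $P\in M_{m,m}(R)$ and $Q\in M_{n,n}(R)$ with $B=PAQ$. A row $[r_1,\dots,r_n]$ over $R$ is unimodular if $r_1,\dots,r_n$ generate the unit ideal $R$. *)

theory Defs
  imports "HOL-Analysis.Analysis"
begin

definition unimodular :: "'a::comm_ring_1 ^ 'n \<Rightarrow> bool" where
  "unimodular r \<longleftrightarrow> (\<exists>c :: 'a ^ 'n. (\<Sum>i\<in>UNIV. c $ i * r $ i) = 1)"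

definition entries_unimodular :: "'a::comm_ring_1 ^ 'n ^ 'm \<Rightarrow> bool" where
  "entries_unimodular A \<longleftrightarrow>
     (\<exists>c :: 'a ^ 'n ^ 'm. (\<Sum>i\<in>UNIV. \<Sum>j\<in>UNIV. c $ i $ j * A $ i $ j) = 1)"

definition mat_equiv :: "'a::comm_ring_1 ^ 'n ^ 'm \<Rightarrow> 'a ^ 'n ^ 'm \<Rightarrow> bool" where
  "mat_equiv A B \<longleftrightarrow>
     (\<exists>(P :: 'a ^ 'm ^ 'm) (Q :: 'a ^ 'n ^ 'n). invertible P \<and> invertible Q \<and> B = P ** A ** Q)"

definition diagonal_mat :: "'a::zero ^ 'n ^ 'n \<Rightarrow> bool" where
  "diagonal_mat D \<longleftrightarrow> (\<forall>i j. i \<noteq> j \<longrightarrow> D $ i $ j = 0)"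

definition row_module :: "'a::comm_ring_1 ^ 'n ^ 'm \<Rightarrow> ('a ^ 'n) set" where
  "row_module A = {c v* A | c. True}"

definition diag2 :: "'a::comm_ring_1 \<Rightarrow> 'a \<Rightarrow> 'a ^ 2 ^ 2" where
  "diag2 a b = (\<chi> i j. if i = j then (if i = 1 then a else b) else 0)"

end

theory Submission
  imports Defs
begin

text \<open>
  The ideal generated by the entries of a matrix can only shrink under multiplication by
  other matrices, so it is an invariant of equivalence; similarly the entries of
  \<open>x v* M\<close> lie in the ideal generated by those of \<open>x\<close>. Hence if \<open>D = P A Q\<close> is
  diagonal, its diagonal is unimodular; it equals \<open>((1 v* P) v* A) v* Q\<close>, so the row
  \<open>(1 v* P) v* A\<close> of the row module is unimodular too. This direction works in any size.

  Conversely, let \<open>r = c v* A\<close> be unimodular; then so is \<open>c\<close>. A unimodular pair \<open>(a, b)\<close>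
  with \<open>u a + v b = 1\<close> is the first row of a matrix of determinant 1, and is sent to
  \<open>(1, 0)\<close> by one. Taking \<open>P\<close> with first row \<open>c\<close> and \<open>Q\<close> with \<open>r v* Q = (1, 0)\<close>, the
  matrix \<open>P A Q\<close> has first row \<open>(1, 0)\<close>, and a single row operation turns it into
  \<open>diag2 1 d\<close>.
\<close>

lemma entries_unimodular_of_mult_left:
  fixes A :: "'a::comm_ring_1 ^ 'n ^ 'm" and P :: "'a ^ 'm ^ 'k"
  assumes "entries_unimodular (P ** A)"
  shows "entries_unimodular A"
proof -
  obtain c :: "'a ^ 'n ^ 'k" where c: "(\<Sum>i\<in>UNIV. \<Sum>j\<in>UNIV. c $ i $ j * (P ** A) $ i $ j) = 1"
    using assms unfolding entries_unimodular_def by blast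
  have "(\<Sum>k\<in>UNIV. \<Sum>j\<in>UNIV. (\<Sum>i\<in>UNIV. c $ i $ j * P $ i $ k) * A $ k $ j)
      = (\<Sum>k\<in>UNIV. \<Sum>j\<in>UNIV. \<Sum>i\<in>UNIV. c $ i $ j * P $ i $ k * A $ k $ j)"
    by (simp add: sum_distrib_right)
  also have "\<dots> = (\<Sum>k\<in>UNIV. \<Sum>i\<in>UNIV. \<Sum>j\<in>UNIV. c $ i $ j * P $ i $ k * A $ k $ j)"
    by (rule sum.cong[OF refl], rule sum.swap)
  also have "\<dots> = (\<Sum>i\<in>UNIV. \<Sum>k\<in>UNIV. \<Sum>j\<in>UNIV. c $ i $ j * P $ i $ k * A $ k $ j)"
    by (rule sum.swap)
  also have "\<dots> = (\<Sum>i\<in>UNIV. \<Sum>j\<in>UNIV. \<Sum>k\<in>UNIV. c $ i $ j * P $ i $ k * A $ k $ j)"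
    by (rule sum.cong[OF refl], rule sum.swap)
  also have "\<dots> = (\<Sum>i\<in>UNIV. \<Sum>j\<in>UNIV. c $ i $ j * (P ** A) $ i $ j)"
    unfolding matrix_matrix_mult_def by (simp add: sum_distrib_left mult.assoc)
  also note c
  finally have "(\<Sum>k\<in>UNIV. \<Sum>j\<in>UNIV. (\<chi> k j. \<Sum>i\<in>UNIV. c $ i $ j * P $ i $ k) $ k $ j * A $ k $ j) = 1"
    by simp
  then show ?thesis
    unfolding entries_unimodular_def by blast
qed

lemma entries_unimodular_of_mult_right:
  fixes A :: "'a::comm_ring_1 ^ 'n ^ 'm" and Q :: "'a ^ 'l ^ 'n"
  assumes "entries_unimodular (A ** Q)"
  shows "entries_unimodular A"
proof -
  obtain c :: "'a ^ 'l ^ 'm" where c: "(\<Sum>i\<in>UNIV. \<Sum>j\<in>UNIV. c $ i $ j * (A ** Q) $ i $ j) = 1"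
    using assms unfolding entries_unimodular_def by blast
  have "(\<Sum>i\<in>UNIV. \<Sum>k\<in>UNIV. (\<Sum>j\<in>UNIV. c $ i $ j * Q $ k $ j) * A $ i $ k)
      = (\<Sum>i\<in>UNIV. \<Sum>k\<in>UNIV. \<Sum>j\<in>UNIV. c $ i $ j * (A $ i $ k * Q $ k $ j))"
    by (simp add: sum_distrib_left sum_distrib_right mult_ac)
  also have "\<dots> = (\<Sum>i\<in>UNIV. \<Sum>j\<in>UNIV. c $ i $ j * (A ** Q) $ i $ j)"
    unfolding matrix_matrix_mult_def by (simp add: sum_distrib_left sum.swap[of _ "UNIV :: 'n set"])
  also note c
  finally have "(\<Sum>i\<in>UNIV. \<Sum>k\<in>UNIV. (\<chi> i k. \<Sum>j\<in>UNIV. c $ i $ j * Q $ k $ j) $ i $ k * A $ i $ k) = 1"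
    by simp
  then show ?thesis
    unfolding entries_unimodular_def by blast
qed

lemma entries_unimodular_of_mult:
  fixes A :: "'a::comm_ring_1 ^ 'n ^ 'm" and P :: "'a ^ 'm ^ 'k" and Q :: "'a ^ 'l ^ 'n"
  assumes "entries_unimodular (P ** A ** Q)"
  shows "entries_unimodular A"
  using entries_unimodular_of_mult_left[OF entries_unimodular_of_mult_right[OF assms]] .

lemma unimodular_of_vector_matrix_mult:
  fixes x :: "'a::comm_ring_1 ^ 'm" and M :: "'a ^ 'n ^ 'm"
  assumes "unimodular (x v* M)"
  shows "unimodular x"
proof -
  obtain c :: "'a ^ 'n" where c: "(\<Sum>j\<in>UNIV. c $ j * (x v* M) $ j) = 1"
    using assms unfolding unimodular_def by blast
  have "(\<Sum>i\<in>UNIV. (M *v c) $ i * x $ i) = (\<Sum>j\<in>UNIV. c $ j * (x v* M) $ j)"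
    unfolding matrix_vector_mult_def vector_matrix_mult_def
    by (simp add: sum_distrib_left sum_distrib_right mult_ac sum.swap[of _ "UNIV :: 'm set"])
  also note c
  finally show ?thesis
    unfolding unimodular_def by blast
qed

lemma sum_diagonal_column:
  fixes D :: "'a::comm_ring_1 ^ 'n ^ 'n"
  assumes "diagonal_mat D"
  shows "(\<Sum>i\<in>UNIV. f i * D $ i $ j) = f j * D $ j $ j"
proof -
  have "(\<Sum>i\<in>UNIV. f i * D $ i $ j) = (\<Sum>i\<in>UNIV. if i = j then f j * D $ j $ j else 0)"
    using assms unfolding diagonal_mat_def by (intro sum.cong) auto
  then show ?thesis by simp
qed

lemma unimodular_diagonal_column_sums:
  fixes D :: "'a::comm_ring_1 ^ 'n ^ 'n"
  assumes "diagonal_mat D" "entries_unimodular D"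
  shows "unimodular (1 v* D)"
proof -
  obtain c :: "'a ^ 'n ^ 'n" where c: "(\<Sum>i\<in>UNIV. \<Sum>j\<in>UNIV. c $ i $ j * D $ i $ j) = 1"
    using assms(2) unfolding entries_unimodular_def by blast
  have "(\<Sum>j\<in>UNIV. (\<chi> j. c $ j $ j) $ j * (1 v* D) $ j) = (\<Sum>j\<in>UNIV. \<Sum>i\<in>UNIV. c $ i $ j * D $ i $ j)"
    using sum_diagonal_column[OF assms(1), of "\<lambda>_. 1"] sum_diagonal_column[OF assms(1)]
    unfolding vector_matrix_mult_def by simp
  also have "\<dots> = (\<Sum>i\<in>UNIV. \<Sum>j\<in>UNIV. c $ i $ j * D $ i $ j)"
    by (rule sum.swap)
  also note c
  finally show ?thesis
    unfolding unimodular_def by blast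
qed

lemma unimodular_row_module_if_equiv_diagonal:
  fixes A :: "'a::comm_ring_1 ^ 'n ^ 'n"
  assumes "entries_unimodular A" "diagonal_mat D" "mat_equiv A D"
  shows "\<exists>r\<in>row_module A. unimodular r"
proof -
  obtain P Q where "invertible P" "invertible Q" and D: "D = P ** A ** Q"
    using assms(3) unfolding mat_equiv_def by blast
  then obtain P' Q' where P': "P' ** P = mat 1" and Q': "Q ** Q' = mat 1"
    unfolding invertible_def by blast
  have "A = (P' ** P) ** A ** (Q ** Q')"
    by (simp add: P' Q')
  also have "\<dots> = P' ** D ** Q'"
    by (simp add: D matrix_mul_assoc)
  finally have "A = P' ** D ** Q'" .
  then have "entries_unimodular D"
    using assms(1) entries_unimodular_of_mult by metis
  then have "unimodular (((1 v* P) v* A) v* Q)"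
    using unimodular_diagonal_column_sums[OF assms(2)]
    by (simp add: D vector_matrix_mul_assoc matrix_mul_assoc)
  then have "unimodular ((1 v* P) v* A)"
    by (rule unimodular_of_vector_matrix_mult)
  moreover have "(1 v* P) v* A \<in> row_module A"
    unfolding row_module_def by blast
  ultimately show ?thesis ..
qed

lemma invertible_2_if_det_eq_1:
  fixes M :: "'a::comm_ring_1 ^ 2 ^ 2"
  assumes "det M = 1"
  shows "invertible M"
  unfolding invertible_def
proof (intro exI conjI)
  let ?adj = "vector [vector [M $ 2 $ 2, - M $ 1 $ 2], vector [- M $ 2 $ 1, M $ 1 $ 1]] :: 'a ^ 2 ^ 2"
  have det: "M $ 1 $ 1 * M $ 2 $ 2 - M $ 1 $ 2 * M $ 2 $ 1 = 1"
    using assms by (simp add: det_2)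
  show "M ** ?adj = mat 1" "?adj ** M = mat 1"
    using det unfolding vec_eq_iff forall_2 matrix_matrix_mult_def mat_def
    by (simp_all add: sum_2 algebra_simps)
qed

lemma unimodular_2_iff: "unimodular (x :: 'a::comm_ring_1 ^ 2) \<longleftrightarrow> (\<exists>u v. u * x $ 1 + v * x $ 2 = 1)"
  unfolding unimodular_def
  by (metis (no_types, lifting) sum_2 vector_2)

lemma unimodular_2_reduce_to_e1:
  fixes r :: "'a::comm_ring_1 ^ 2"
  assumes "unimodular r"
  obtains Q :: "'a ^ 2 ^ 2" where "invertible Q" "r v* Q = vector [1, 0]"
proof -
  obtain u v where uv: "u * r $ 1 + v * r $ 2 = 1"
    using assms unimodular_2_iff by blast
  let ?Q = "vector [vector [u, - r $ 2], vector [v, r $ 1]] :: 'a ^ 2 ^ 2"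
  have "invertible ?Q"
    using uv by (intro invertible_2_if_det_eq_1) (simp add: det_2 algebra_simps)
  moreover have "r v* ?Q = vector [1, 0]"
    using uv unfolding vec_eq_iff forall_2 vector_matrix_mult_def by (simp add: sum_2 algebra_simps)
  ultimately show ?thesis
    by (rule that)
qed

lemma unimodular_2_completion:
  fixes x :: "'a::comm_ring_1 ^ 2"
  assumes "unimodular x"
  obtains P :: "'a ^ 2 ^ 2" where "invertible P" "P $ 1 = x"
proof -
  obtain u v where uv: "u * x $ 1 + v * x $ 2 = 1"
    using assms unimodular_2_iff by blast
  let ?P = "vector [x, vector [- v, u]] :: 'a ^ 2 ^ 2"
  have "invertible ?P"
    using uv by (intro invertible_2_if_det_eq_1) (simp add: det_2 algebra_simps)
  moreover have "?P $ 1 = x"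
    by simp
  ultimately show ?thesis
    by (rule that)
qed

lemma row_matrix_matrix_mult: "(A ** B) $ i = A $ i v* B"
  by (simp add: matrix_matrix_mult_def vector_matrix_mult_def vec_eq_iff mult.commute)

lemma row_reduce_first_row_e1:
  fixes B :: "'a::comm_ring_1 ^ 2 ^ 2"
  assumes "B $ 1 = vector [1, 0]"
  obtains E :: "'a ^ 2 ^ 2" where "invertible E" "E ** B = diag2 1 (B $ 2 $ 2)"
proof
  let ?E = "vector [vector [1, 0], vector [- B $ 2 $ 1, 1]] :: 'a ^ 2 ^ 2"
  show "invertible ?E"
    by (intro invertible_2_if_det_eq_1) (simp add: det_2)
  have "B $ 1 $ 1 = 1" "B $ 1 $ 2 = 0"
    using assms by simp_all
  then show "?E ** B = diag2 1 (B $ 2 $ 2)"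
    unfolding vec_eq_iff forall_2 matrix_matrix_mult_def diag2_def by (simp add: sum_2)
qed

lemma equiv_diag2_if_unimodular_in_row_module:
  fixes A :: "'a::comm_ring_1 ^ 2 ^ 2"
  assumes "r \<in> row_module A" "unimodular r"
  shows "\<exists>d. mat_equiv A (diag2 1 d)"
proof -
  obtain c where r: "r = c v* A"
    using assms(1) unfolding row_module_def by blast
  then have "unimodular c"
    using assms(2) unimodular_of_vector_matrix_mult by blast
  then obtain P :: "'a ^ 2 ^ 2" where P: "invertible P" "P $ 1 = c"
    by (rule unimodular_2_completion)
  obtain Q :: "'a ^ 2 ^ 2" where Q: "invertible Q" "r v* Q = vector [1, 0]"
    using assms(2) by (rule unimodular_2_reduce_to_e1)
  have "(P ** A ** Q) $ 1 = vector [1, 0]"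
    using P(2) Q(2) r by (simp add: row_matrix_matrix_mult)
  then obtain E where E: "invertible E" "E ** (P ** A ** Q) = diag2 1 ((P ** A ** Q) $ 2 $ 2)"
    by (rule row_reduce_first_row_e1)
  have "invertible (E ** P)"
    using E(1) P(1) by (rule invertible_mult)
  with Q(1) E(2) show ?thesis
    unfolding mat_equiv_def by (metis matrix_mul_assoc)
qed

theorem lemma2p4:
  fixes A :: "'a::comm_ring_1 ^ 2 ^ 2"
  assumes "entries_unimodular A"
  shows "((\<exists>D. diagonal_mat D \<and> mat_equiv A D) \<longleftrightarrow> (\<exists>r\<in>row_module A. unimodular r))
         \<and> ((\<exists>D. diagonal_mat D \<and> mat_equiv A D) \<longrightarrow> (\<exists>d. mat_equiv A (diag2 1 d)))"
proof -
  have "diagonal_mat (diag2 1 d)" for d :: 'a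
    unfolding diagonal_mat_def diag2_def by simp
  then show ?thesis
    using unimodular_row_module_if_equiv_diagonal[OF assms]
      equiv_diag2_if_unimodular_in_row_module by blast
qed

end
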